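(* A magma $(Q,\cdot)$ is a double Ward quasigroup (for some element of $Q$) if and only if it is cancellative and has an idempotent $e$ (i.e. $ee=e$) such that $(e\cdot xz)(ey\cdot z)=xy$ for all $x,y,z\in Q$.
   Context: A quasigroup is a magma in which $ax=b$ and $ya=b$ have unique solutions for all $a,b$. A double Ward quasigroup $(Q,\cdot,e)$ is a quasigroup with an element $e$ such that $(ee\cdot xz)(ey\cdot z)=xy$ for all $x,y,z$. A magma is cancellative if it is both left and right cancellative. *)

theory Defs
  imports Main
begin

definition quasigroup :: "('a \<Rightarrow> 'a \<Rightarrow> 'a) \<Rightarrow> bool" where
  "quasigroup m \<longleftrightarrow> (\<forall>a b. (\<exists>!x. m a x = b) \<and> (\<exists>!y. m y a = b))"

definition double_ward_quasigroup :: "('a \<Rightarrow> 'a \<Rightarrow> 'a) \<Rightarrow> 'a \<Rightarrow> bool" where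
  "double_ward_quasigroup m e \<longleftrightarrow> quasigroup m \<and>
     (\<forall>x y z. m (m (m e e) (m x z)) (m (m e y) z) = m x y)"

definition left_cancellative :: "('a \<Rightarrow> 'a \<Rightarrow> 'a) \<Rightarrow> bool" where
  "left_cancellative m \<longleftrightarrow> (\<forall>a x y. m a x = m a y \<longrightarrow> x = y)"

definition right_cancellative :: "('a \<Rightarrow> 'a \<Rightarrow> 'a) \<Rightarrow> bool" where
  "right_cancellative m \<longleftrightarrow> (\<forall>a x y. m x a = m y a \<longrightarrow> x = y)"

definition cancellative :: "('a \<Rightarrow> 'a \<Rightarrow> 'a) \<Rightarrow> bool" where
  "cancellative m \<longleftrightarrow> left_cancellative m \<and> right_cancellative m"

end

theory Submission
  imports Defs
begin

text \<open>
  For the forward direction write \<open>f = ee\<close>. Two instances of the identity show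
  \<open>ea \<cdot> (eb \<cdot> b) = a\<close>; comparing this with the instance \<open>(f \<cdot> xb)(eb \<cdot> b) = xb\<close>
  and cancelling on the right twice gives \<open>f = e\<close>.
  Conversely, if \<open>ee = e\<close> the identity with \<open>y = z = e\<close> makes left multiplication
  by \<open>e\<close> a left inverse of right multiplication by \<open>e\<close>. Suitable instances of the
  identity then exhibit solutions of \<open>px = q\<close> and \<open>yp = q\<close>, which are unique by
  cancellativity.
\<close>

lemma quasigroup_cancellative:
  assumes "quasigroup m"
  shows "cancellative m"
  unfolding cancellative_def left_cancellative_def right_cancellative_def
proof (intro conjI allI impI)
  fix a x y
  show "m a x = m a y \<Longrightarrow> x = y"
    using assms unfolding quasigroup_def by (metis (full_types))
  show "m x a = m y a \<Longrightarrow> x = y"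
    using assms unfolding quasigroup_def by (metis (full_types))
qed

lemma cancellative_quasigroupI:
  assumes "cancellative m"
    and "\<And>a b. \<exists>x. m a x = b"
    and "\<And>a b. \<exists>y. m y a = b"
  shows "quasigroup m"
  using assms unfolding quasigroup_def cancellative_def left_cancellative_def right_cancellative_def
  by blast

lemma double_ward_left_mult_square:
  assumes lc: "left_cancellative m"
    and ward: "\<And>x y z. m (m (m e e) (m x z)) (m (m e y) z) = m x y"
  shows "m (m e a) (m (m e b) b) = a"
proof -
  let ?c = "m (m e b) b" and ?k = "m (m e e) (m a b)"
  have "m ?k ?c = m a b"
    by (rule ward)
  then have "m ?k (m (m e a) ?c) = m (m (m e e) (m ?k ?c)) (m (m e a) ?c)"
    by simp
  also have "\<dots> = m ?k a"
    by (rule ward)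
  finally show ?thesis
    using lc unfolding left_cancellative_def by blast
qed

lemma double_ward_idempotent:
  assumes canc: "cancellative m"
    and ward: "\<And>x y z. m (m (m e e) (m x z)) (m (m e y) z) = m x y"
  shows "m e e = e"
proof -
  have lc: "left_cancellative m" and rc: "right_cancellative m"
    using canc unfolding cancellative_def by auto
  have "m (m (m e e) (m e e)) (m (m e e) e) = m e e"
    by (rule ward)
  also have "\<dots> = m (m e (m e e)) (m (m e e) e)"
    by (rule double_ward_left_mult_square[OF lc ward, symmetric])
  finally have "m (m e e) (m e e) = m e (m e e)"
    using rc unfolding right_cancellative_def by blast
  then show ?thesis
    using rc unfolding right_cancellative_def by blast
qed

lemma ward_left_mult_right_mult:
  assumes rc: "right_cancellative m"
    and idem: "m e e = e"
    and ward: "\<And>x y z. m (m e (m x z)) (m (m e y) z) = m x y"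
  shows "m e (m x e) = x"
proof -
  have "m (m e (m x e)) e = m x e"
    using ward[of x e e] idem by simp
  then show ?thesis
    using rc unfolding right_cancellative_def by blast
qed

lemma ward_left_divisible:
  assumes rc: "right_cancellative m"
    and idem: "m e e = e"
    and ward: "\<And>x y z. m (m e (m x z)) (m (m e y) z) = m x y"
  shows "\<exists>x. m p x = q"
proof -
  note inv = ward_left_mult_right_mult[OF rc idem ward]
  let ?w = "m (m p e) e"
  have "m p (m q ?w) = m (m e (m e ?w)) (m (m e (m q e)) ?w)"
    by (simp add: inv)
  also have "\<dots> = m e (m q e)"
    by (rule ward)
  also have "\<dots> = q"
    by (rule inv)
  finally show ?thesis ..
qed

lemma ward_right_divisible:
  assumes rc: "right_cancellative m"
    and idem: "m e e = e"
    and ward: "\<And>x y z. m (m e (m x z)) (m (m e y) z) = m x y"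
  shows "\<exists>y. m y p = q"
proof -
  note inv = ward_left_mult_right_mult[OF rc idem ward]
  obtain z where z: "m q z = p"
    using ward_left_divisible[OF rc idem ward] by blast
  have "m (m e (m e z)) p = m (m e (m e z)) (m (m e (m q e)) z)"
    by (simp add: inv z)
  also have "\<dots> = m e (m q e)"
    by (rule ward)
  also have "\<dots> = q"
    by (rule inv)
  finally show ?thesis ..
qed

theorem corollary4p12:
  fixes m :: "'a \<Rightarrow> 'a \<Rightarrow> 'a"
  shows "(\<exists>e. double_ward_quasigroup m e) \<longleftrightarrow>
         (cancellative m \<and>
          (\<exists>e. m e e = e \<and> (\<forall>x y z. m (m e (m x z)) (m (m e y) z) = m x y)))"
proof
  assume "\<exists>e. double_ward_quasigroup m e"
  then obtain e where qg: "quasigroup m"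
    and ward: "\<And>x y z. m (m (m e e) (m x z)) (m (m e y) z) = m x y"
    unfolding double_ward_quasigroup_def by blast
  have canc: "cancellative m"
    using qg by (rule quasigroup_cancellative)
  moreover have "m e e = e"
    using double_ward_idempotent[OF canc ward] .
  ultimately show "cancellative m \<and>
      (\<exists>e. m e e = e \<and> (\<forall>x y z. m (m e (m x z)) (m (m e y) z) = m x y))"
    using ward by auto
next
  assume "cancellative m \<and>
      (\<exists>e. m e e = e \<and> (\<forall>x y z. m (m e (m x z)) (m (m e y) z) = m x y))"
  then obtain e where canc: "cancellative m" and idem: "m e e = e"
    and ward: "\<And>x y z. m (m e (m x z)) (m (m e y) z) = m x y"
    by blast
  have rc: "right_cancellative m"
    using canc unfolding cancellative_def by simp
  have "quasigroup m"
    using canc ward_left_divisible[OF rc idem ward] ward_right_divisible[OF rc idem ward]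
    by (rule cancellative_quasigroupI)
  then have "double_ward_quasigroup m e"
    unfolding double_ward_quasigroup_def by (simp add: idem ward)
  then show "\<exists>e. double_ward_quasigroup m e" ..
qed

end
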